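(* Let $X$ and $Y$ be random variables with mean zero, variance $\sigma^2\in(0,\infty)$, and densities $f_X$ and $f_Y$. Let $X^*$ and $Y^*$ have the zero bias distributions of $X$ and $Y$, with $f_{Y^*}$ the density of $Y^*$. Suppose there is $x_0\ge0$ such that 1. $t\mapsto f_X(t)/f_Y(t)$ is decreasing on $t\ge x_0$; 2. for each $x\ge x_0$ there is a constant $a_Y(x)$ depending only on $x$ such that $f_{Y^*}(t)/f_Y(t)\le a_Y(x)$ for all $t\ge x$. Then $\mathbb{P}(X^*\ge x)\le a_Y(x)\,\mathbb{P}(X\ge x)$ for all $x\ge x_0$.
   Context: Zero bias transform: for $X$ with mean zero and finite variance $\sigma^2$, $X^*$ has the zero bias distribution of $X$ if $\mathbb{E}[Xf(X)]=\sigma^2\mathbb{E}[f'(X^* )]$ for all absolutely continuous $f$ for which the expectations exist; $X^*$ is absolutely continuous with density $f_{X^*}(t)=\sigma^{-2}\mathbb{E}[X\mathbb{I}_{X>t}]$. *)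

theory Defs
  imports "HOL-Probability.Probability"
begin

definition abs_cont_with_deriv :: "(real \<Rightarrow> real) \<Rightarrow> (real \<Rightarrow> real) \<Rightarrow> bool" where
  "abs_cont_with_deriv f g \<longleftrightarrow>
     (\<forall>a b. a \<le> b \<longrightarrow> set_integrable lborel {a..b} g \<and>
                      (LINT t:{a..b}|lborel. g t) = f b - f a)"

definition zero_bias :: "'a measure \<Rightarrow> ('a \<Rightarrow> real) \<Rightarrow> ('a \<Rightarrow> real) \<Rightarrow> bool" where
  "zero_bias M X Xs \<longleftrightarrow>
     Xs \<in> borel_measurable M \<and>
     (\<forall>f g. abs_cont_with_deriv f g \<longrightarrow>
        integrable M (\<lambda>\<omega>. X \<omega> * f (X \<omega>)) \<longrightarrow>
        integrable M (\<lambda>\<omega>. g (Xs \<omega>)) \<longrightarrow>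
        prob_space.expectation M (\<lambda>\<omega>. X \<omega> * f (X \<omega>)) =
          prob_space.variance M X * prob_space.expectation M (\<lambda>\<omega>. g (Xs \<omega>)))"

end

theory Submission
  imports Defs
begin

text \<open>Testing the zero bias identity with \<open>f(u) = (u - t)\<^sup>+\<close>, whose derivative is the indicator
  of \<open>[t, \<infinity>)\<close>, gives \<open>P(Z* \<ge> t) = \<sigma>\<^sup>-\<^sup>2 E[Z (Z - t)\<^sup>+]\<close>, and by Tonelli this is
  \<open>\<sigma>\<^sup>-\<^sup>2 \<integral>\<^sub>t\<^sup>\<infinity> E[Z 1{Z \<ge> u}] du\<close>; so on \<open>[0, \<infinity>)\<close> the density of \<open>Z*\<close> is
  \<open>\<sigma>\<^sup>-\<^sup>2 E[Z 1{Z \<ge> u}]\<close>. Since \<open>f\<^sub>X / f\<^sub>Y\<close> decreases, \<open>E[X 1{X \<ge> u}] \<le> (f\<^sub>X(u) / f\<^sub>Y(u)) E[Y 1{Y \<ge> u}]\<close>,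
  hence \<open>f\<^sub>X\<^sub>*(u) \<le> (f\<^sub>X(u) / f\<^sub>Y(u)) f\<^sub>Y\<^sub>*(u) \<le> a\<^sub>Y(x) f\<^sub>X(u)\<close> for \<open>u \<ge> x\<close>; integrating over
  \<open>[x, \<infinity>)\<close> gives the claim.\<close>

text \<open>\<open>tail_moment f u = E[Z 1{Z \<ge> u}]\<close> for \<open>Z\<close> with density \<open>f\<close>, but only for \<open>u \<ge> 0\<close>:
  the cast to \<^typ>\<open>ennreal\<close> discards negative values of the integrand.\<close>
definition tail_moment :: "(real \<Rightarrow> real) \<Rightarrow> real \<Rightarrow> ennreal" where
  "tail_moment f u = (\<integral>\<^sup>+ s \<in> {u..}. ennreal (s * f s) \<partial>lborel)"

lemma borel_measurable_indicator_atLeast_pair[measurable]: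
  "(\<lambda>(u::real, s::real). indicator {u..} s :: ennreal) \<in> borel_measurable (lborel \<Otimes>\<^sub>M lborel)"
  by (simp add: indicator_def split_beta')

lemma borel_measurable_tail_moment[measurable]:
  assumes [measurable]: "f \<in> borel_measurable borel"
  shows "tail_moment f \<in> borel_measurable borel"
proof -
  have "(\<lambda>u. \<integral>\<^sup>+ s. ennreal (s * f s) * indicator {u..} s \<partial>lborel) \<in> borel_measurable lborel"
    by (rule lborel.borel_measurable_nn_integral) (simp add: measurable_split_conv)
  then show ?thesis unfolding tail_moment_def by simp
qed

lemma nn_integral_mult_pos_part_eq_tail_moment:
  fixes f :: "real \<Rightarrow> real"
  assumes [measurable]: "f \<in> borel_measurable borel" and f_nonneg: "\<And>s. 0 \<le> f s" and "0 \<le> t"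
  shows "(\<integral>\<^sup>+ s. ennreal (f s) * ennreal (s * max (s - t) 0) \<partial>lborel)
       = (\<integral>\<^sup>+ u \<in> {t..}. tail_moment f u \<partial>lborel)"
proof -
  have pointwise: "ennreal (f s) * ennreal (s * max (s - t) 0)
      = (\<integral>\<^sup>+ u. ennreal (s * f s) * indicator {u..} s * indicator {t..} u \<partial>lborel)" for s
  proof -
    have "(\<integral>\<^sup>+ u. ennreal (s * f s) * indicator {u..} s * indicator {t..} u \<partial>lborel)
        = (\<integral>\<^sup>+ u. ennreal (s * f s) * indicator {t..s} u \<partial>lborel)"
      by (intro nn_integral_cong) (auto simp: indicator_def)
    also have "\<dots> = ennreal (s * f s) * ennreal (max (s - t) 0)"
      by (simp add: nn_integral_cmult_indicator emeasure_lborel_Icc_eq max_def)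
    also have "\<dots> = ennreal (f s) * ennreal (s * max (s - t) 0)"
      using \<open>0 \<le> t\<close> f_nonneg[of s]
      by (cases "t \<le> s") (simp_all add: ennreal_mult''[symmetric] mult_ac)
    finally show ?thesis ..
  qed
  have "(\<integral>\<^sup>+ s. ennreal (f s) * ennreal (s * max (s - t) 0) \<partial>lborel)
      = (\<integral>\<^sup>+ s. \<integral>\<^sup>+ u. ennreal (s * f s) * indicator {u..} s * indicator {t..} u \<partial>lborel \<partial>lborel)"
    by (simp only: pointwise)
  also have "\<dots> = (\<integral>\<^sup>+ u. \<integral>\<^sup>+ s. ennreal (s * f s) * indicator {u..} s * indicator {t..} u \<partial>lborel \<partial>lborel)"
    by (rule lborel_pair.Fubini') (simp add: measurable_split_conv)
  also have "\<dots> = (\<integral>\<^sup>+ u \<in> {t..}. tail_moment f u \<partial>lborel)"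
    unfolding tail_moment_def by (intro nn_integral_cong nn_integral_multc) measurable
  finally show ?thesis .
qed

lemma integrable_mult_pos_part:
  fixes Z :: "'a \<Rightarrow> real"
  assumes "integrable M Z" and "integrable M (\<lambda>\<omega>. (Z \<omega>)\<^sup>2)"
  shows "integrable M (\<lambda>\<omega>. Z \<omega> * max (Z \<omega> - t) 0)"
proof (rule Bochner_Integration.integrable_bound)
  show "integrable M (\<lambda>\<omega>. (Z \<omega>)\<^sup>2 + \<bar>t\<bar> * \<bar>Z \<omega>\<bar>)"
    using assms by auto
  show "AE \<omega> in M. norm (Z \<omega> * max (Z \<omega> - t) 0) \<le> norm ((Z \<omega>)\<^sup>2 + \<bar>t\<bar> * \<bar>Z \<omega>\<bar>)"
  proof (intro AE_I2)
    fix \<omega>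
    have "\<bar>Z \<omega>\<bar> * max (Z \<omega> - t) 0 \<le> \<bar>Z \<omega>\<bar> * (\<bar>Z \<omega>\<bar> + \<bar>t\<bar>)"
      by (intro mult_left_mono) auto
    then show "norm (Z \<omega> * max (Z \<omega> - t) 0) \<le> norm ((Z \<omega>)\<^sup>2 + \<bar>t\<bar> * \<bar>Z \<omega>\<bar>)"
      by (simp add: abs_mult power2_eq_square algebra_simps)
  qed
qed (use assms in measurable)

lemma abs_cont_with_deriv_pos_part:
  "abs_cont_with_deriv (\<lambda>u. max (u - t) 0) (indicator {t..})"
  unfolding abs_cont_with_deriv_def
proof (intro allI impI conjI)
  fix a b :: real assume "a \<le> b"
  have Icc_inter: "indicator {a..b} x * indicator {t..} x = (indicator {max a t..b} x :: real)" for x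
    by (auto simp: indicator_def)
  show "set_integrable lborel {a..b} (indicator {t..} :: real \<Rightarrow> real)"
    unfolding set_integrable_def by (simp add: Icc_inter emeasure_lborel_Icc_eq)
  show "(LINT u:{a..b}|lborel. (indicator {t..} u :: real)) = max (b - t) 0 - max (a - t) 0"
    unfolding set_lebesgue_integral_def using \<open>a \<le> b\<close> by (simp add: Icc_inter max_def)
qed

lemma (in prob_space) zero_bias_pos_part:
  assumes zb: "zero_bias M Z Zs"
    and "integrable M Z" and "integrable M (\<lambda>\<omega>. (Z \<omega>)\<^sup>2)"
  shows "expectation (\<lambda>\<omega>. Z \<omega> * max (Z \<omega> - t) 0) = variance Z * prob {\<omega> \<in> space M. t \<le> Zs \<omega>}"
proof -
  have [measurable]: "Zs \<in> borel_measurable M"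
    using zb unfolding zero_bias_def by simp
  have "integrable M (\<lambda>\<omega>. indicator {t..} (Zs \<omega>) :: real)"
    by (rule integrable_const_bound[where B=1]) auto
  then have "expectation (\<lambda>\<omega>. Z \<omega> * max (Z \<omega> - t) 0)
      = variance Z * expectation (\<lambda>\<omega>. indicator {t..} (Zs \<omega>))"
    using zb abs_cont_with_deriv_pos_part integrable_mult_pos_part assms(2,3)
    unfolding zero_bias_def by blast
  also have "expectation (\<lambda>\<omega>. indicator {t..} (Zs \<omega>)) = expectation (indicator {\<omega> \<in> space M. t \<le> Zs \<omega>})"
    by (intro Bochner_Integration.integral_cong) (auto simp: indicator_def)
  finally show ?thesis
    by simp
qed

lemma (in prob_space) zero_bias_tail_prob:
  assumes zb: "zero_bias M Z Zs" and Z: "distributed M lborel Z (\<lambda>s. ennreal (fZ s))"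
    and fZ_nonneg: "\<And>s. 0 \<le> fZ s"
    and "integrable M Z" and "integrable M (\<lambda>\<omega>. (Z \<omega>)\<^sup>2)"
    and "0 < variance Z" and "0 \<le> t"
  shows "ennreal (prob {\<omega> \<in> space M. t \<le> Zs \<omega>})
       = ennreal (1 / variance Z) * (\<integral>\<^sup>+ u \<in> {t..}. tail_moment fZ u \<partial>lborel)"
proof -
  have [measurable]: "Z \<in> borel_measurable M" "fZ \<in> borel_measurable borel"
    using distributed_measurable[OF Z] distributed_real_measurable[OF _ Z] fZ_nonneg by auto
  define E where "E = expectation (\<lambda>\<omega>. Z \<omega> * max (Z \<omega> - t) 0)"
  have pos: "0 \<le> z * max (z - t) 0" for z
    using \<open>0 \<le> t\<close> by (cases "z \<le> t") auto
  have "ennreal E = (\<integral>\<^sup>+ \<omega>. ennreal (Z \<omega> * max (Z \<omega> - t) 0) \<partial>M)"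
    unfolding E_def using integrable_mult_pos_part assms(4,5)
    by (intro nn_integral_eq_integral[symmetric]) (simp_all add: pos)
  also have "\<dots> = (\<integral>\<^sup>+ s. ennreal (fZ s) * ennreal (s * max (s - t) 0) \<partial>lborel)"
    by (rule distributed_nn_integral[OF Z, symmetric]) simp
  also have "\<dots> = (\<integral>\<^sup>+ u \<in> {t..}. tail_moment fZ u \<partial>lborel)"
    by (rule nn_integral_mult_pos_part_eq_tail_moment) (simp_all add: fZ_nonneg \<open>0 \<le> t\<close>)
  finally have "ennreal E = (\<integral>\<^sup>+ u \<in> {t..}. tail_moment fZ u \<partial>lborel)" .
  moreover have "prob {\<omega> \<in> space M. t \<le> Zs \<omega>} = 1 / variance Z * E"
    using zero_bias_pos_part[OF zb assms(4,5)] \<open>0 < variance Z\<close> unfolding E_def by simp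
  ultimately show ?thesis
    using \<open>0 < variance Z\<close> by (metis ennreal_mult' less_imp_le zero_le_divide_1_iff)
qed

lemma AE_eq_on_tail_if_tail_integrals_eq:
  fixes f g :: "real \<Rightarrow> ennreal"
  assumes [measurable]: "f \<in> borel_measurable borel" "g \<in> borel_measurable borel"
    and finite: "(\<integral>\<^sup>+ u \<in> {a..}. f u \<partial>lborel) < \<infinity>"
    and tails: "\<And>b. a \<le> b \<Longrightarrow> (\<integral>\<^sup>+ u \<in> {b..}. f u \<partial>lborel) = (\<integral>\<^sup>+ u \<in> {b..}. g u \<partial>lborel)"
  shows "AE u in lborel. a \<le> u \<longrightarrow> f u = g u"
proof -
  have restrict: "emeasure (density lborel (\<lambda>u. h u * indicator {a..} u)) {b<..}
      = (\<integral>\<^sup>+ u \<in> {max a b..}. h u \<partial>lborel)"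
    if [measurable]: "h \<in> borel_measurable borel" for h and b
  proof -
    have "emeasure (density lborel (\<lambda>u. h u * indicator {a..} u)) {b<..}
        = (\<integral>\<^sup>+ u. h u * indicator {a..} u * indicator {b<..} u \<partial>lborel)"
      by (simp add: emeasure_density)
    also have "\<dots> = (\<integral>\<^sup>+ u \<in> {max a b..}. h u \<partial>lborel)"
      by (intro nn_integral_cong_AE, use AE_lborel_singleton[of "max a b"] in eventually_elim)
        (auto simp: indicator_def)
    finally show ?thesis .
  qed
  have "density lborel (\<lambda>u. f u * indicator {a..} u) = density lborel (\<lambda>u. g u * indicator {a..} u)"
  proof (rule measure_eqI_lessThan)
    fix b :: real
    have "(\<integral>\<^sup>+ u \<in> {max a b..}. f u \<partial>lborel) \<le> (\<integral>\<^sup>+ u \<in> {a..}. f u \<partial>lborel)"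
      by (intro nn_integral_mono) (auto simp: indicator_def)
    then show "emeasure (density lborel (\<lambda>u. f u * indicator {a..} u)) {b<..} < \<infinity>"
      unfolding restrict[OF \<open>f \<in> borel_measurable borel\<close>] using finite by simp
    show "emeasure (density lborel (\<lambda>u. f u * indicator {a..} u)) {b<..}
        = emeasure (density lborel (\<lambda>u. g u * indicator {a..} u)) {b<..}"
      using restrict[OF \<open>f \<in> borel_measurable borel\<close>] restrict[OF \<open>g \<in> borel_measurable borel\<close>]
      by (simp add: tails)
  qed simp_all
  then have "AE u in lborel. f u * indicator {a..} u = g u * indicator {a..} u"
    by (rule sigma_finite_measure.density_unique[OF sigma_finite_lborel, rotated 2]) simp_all
  then show ?thesis
    by eventually_elim (auto simp: indicator_def)
qed

lemma (in prob_space) zero_bias_density: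
  assumes zb: "zero_bias M Z Zs"
    and Z: "distributed M lborel Z (\<lambda>s. ennreal (fZ s))" and fZ_nonneg: "\<And>s. 0 \<le> fZ s"
    and Zs: "distributed M lborel Zs (\<lambda>s. ennreal (fZs s))" and fZs_nonneg: "\<And>s. 0 \<le> fZs s"
    and "integrable M Z" and "integrable M (\<lambda>\<omega>. (Z \<omega>)\<^sup>2)" and "0 < variance Z"
  shows "AE u in lborel. 0 \<le> u \<longrightarrow> ennreal (fZs u) = ennreal (1 / variance Z) * tail_moment fZ u"
proof (rule AE_eq_on_tail_if_tail_integrals_eq)
  have [measurable]: "fZ \<in> borel_measurable borel" "fZs \<in> borel_measurable borel"
    using distributed_real_measurable[OF _ Z] distributed_real_measurable[OF _ Zs] fZ_nonneg fZs_nonneg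
    by auto
  then show "(\<lambda>u. ennreal (fZs u)) \<in> borel_measurable borel"
    and "(\<lambda>u. ennreal (1 / variance Z) * tail_moment fZ u) \<in> borel_measurable borel"
    by measurable
  have tail_Zs: "(\<integral>\<^sup>+ u \<in> {b..}. ennreal (fZs u) \<partial>lborel) = ennreal (prob {\<omega> \<in> space M. b \<le> Zs \<omega>})" for b
    using distributed_emeasure[OF Zs, of "{b..}"] by (simp add: emeasure_eq_measure vimage_def Int_def conj_commute)
  then show "(\<integral>\<^sup>+ u \<in> {0..}. ennreal (fZs u) \<partial>lborel) < \<infinity>"
    by simp
  fix b :: real assume "0 \<le> b"
  then show "(\<integral>\<^sup>+ u \<in> {b..}. ennreal (fZs u) \<partial>lborel)
      = (\<integral>\<^sup>+ u \<in> {b..}. ennreal (1 / variance Z) * tail_moment fZ u \<partial>lborel)"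
    unfolding tail_Zs using assms
    by (subst zero_bias_tail_prob[OF zb Z]) (simp_all add: nn_integral_cmult mult.assoc)
qed

lemma tail_moment_le_ratio:
  fixes f g :: "real \<Rightarrow> real"
  assumes [measurable]: "g \<in> borel_measurable borel"
    and "0 \<le> u" and "0 \<le> f u" and g_pos: "\<And>s. u \<le> s \<Longrightarrow> 0 < g s"
    and ratio_decr: "\<And>s. u \<le> s \<Longrightarrow> f s / g s \<le> f u / g u"
  shows "tail_moment f u \<le> ennreal (f u / g u) * tail_moment g u"
proof -
  have "ennreal (s * f s) \<le> ennreal (f u / g u) * ennreal (s * g s)" if "u \<le> s" for s
  proof -
    have "f s = f s / g s * g s"
      using g_pos[OF that] by simp
    also have "\<dots> \<le> f u / g u * g s"
      using g_pos[OF that] ratio_decr[OF that] by (intro mult_right_mono) auto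
    finally have "s * f s \<le> f u / g u * (s * g s)"
      using \<open>0 \<le> u\<close> that by (metis mult.left_commute mult_left_mono order.trans)
    then show ?thesis
      using \<open>0 \<le> f u\<close> g_pos[of u] by (simp add: ennreal_mult'[symmetric] ennreal_leI)
  qed
  then have "tail_moment f u \<le> (\<integral>\<^sup>+ s \<in> {u..}. ennreal (f u / g u) * ennreal (s * g s) \<partial>lborel)"
    unfolding tail_moment_def by (intro nn_integral_mono) (simp add: indicator_def)
  also have "\<dots> = ennreal (f u / g u) * tail_moment g u"
    unfolding tail_moment_def by (simp add: nn_integral_cmult mult.assoc)
  finally show ?thesis .
qed

lemma scaled_tail_moment_le_by_ratio:
  fixes fX fY fYs :: "real \<Rightarrow> real" and c :: ennreal
  assumes [measurable]: "fY \<in> borel_measurable borel"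
    and "0 \<le> u" and "0 \<le> fX u" and fY_pos: "\<And>s. u \<le> s \<Longrightarrow> 0 < fY s"
    and "\<And>s. u \<le> s \<Longrightarrow> fX s / fY s \<le> fX u / fY u"
    and fYs_eq: "ennreal (fYs u) = c * tail_moment fY u" and "fYs u / fY u \<le> a"
  shows "c * tail_moment fX u \<le> ennreal (a * fX u)"
proof -
  have "c * tail_moment fX u \<le> c * (ennreal (fX u / fY u) * tail_moment fY u)"
    using assms by (intro mult_left_mono tail_moment_le_ratio) auto
  also have "\<dots> = ennreal (fX u / fY u) * ennreal (fYs u)"
    using fYs_eq by (simp add: mult_ac)
  also have "\<dots> = ennreal (fX u * (fYs u / fY u))"
    using fY_pos[of u] \<open>0 \<le> fX u\<close> by (simp add: ennreal_mult'[symmetric])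
  also have "\<dots> \<le> ennreal (a * fX u)"
    using \<open>0 \<le> fX u\<close> \<open>fYs u / fY u \<le> a\<close> by (intro ennreal_leI) (metis mult.commute mult_left_mono)
  finally show ?thesis .
qed

theorem proposition2p2:
  fixes M :: "'a measure" and X Y Xs Ys :: "'a \<Rightarrow> real"
    and fX fY fYs aY :: "real \<Rightarrow> real" and \<sigma> x0 :: real
  assumes "prob_space M"
    and "\<forall>t. 0 \<le> fX t" and "\<forall>t. 0 \<le> fY t" and "\<forall>t. 0 \<le> fYs t"
    and "distributed M lborel X (\<lambda>t. ennreal (fX t))"
    and "distributed M lborel Y (\<lambda>t. ennreal (fY t))"
    and "integrable M X" and "integrable M Y"
    and "integrable M (\<lambda>\<omega>. (X \<omega>)\<^sup>2)" and "integrable M (\<lambda>\<omega>. (Y \<omega>)\<^sup>2)"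
    and "prob_space.expectation M X = 0" and "prob_space.expectation M Y = 0"
    and "0 < \<sigma>\<^sup>2"
    and "prob_space.variance M X = \<sigma>\<^sup>2" and "prob_space.variance M Y = \<sigma>\<^sup>2"
    and "zero_bias M X Xs" and "zero_bias M Y Ys"
    and "distributed M lborel Ys (\<lambda>t. ennreal (fYs t))"
    and "0 \<le> x0"
    and "\<forall>t. x0 \<le> t \<longrightarrow> 0 < fY t"
    and "\<forall>s t. x0 \<le> s \<longrightarrow> s \<le> t \<longrightarrow> fX t / fY t \<le> fX s / fY s"
    and "\<forall>x. x0 \<le> x \<longrightarrow> (\<forall>t. x \<le> t \<longrightarrow> fYs t / fY t \<le> aY x)"
  shows "\<forall>x. x0 \<le> x \<longrightarrow>
           measure M {\<omega> \<in> space M. x \<le> Xs \<omega>} \<le> aY x * measure M {\<omega> \<in> space M. x \<le> X \<omega>}"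
proof (intro allI impI)
  fix x assume "x0 \<le> x"
  interpret prob_space M by fact
  define c where "c = ennreal (1 / \<sigma>\<^sup>2)"
  have [measurable]: "fX \<in> borel_measurable borel" "fY \<in> borel_measurable borel"
    using distributed_real_measurable[OF _ assms(5)] distributed_real_measurable[OF _ assms(6)] assms(2,3)
    by simp_all
  have fYs_eq: "AE u in lborel. 0 \<le> u \<longrightarrow> ennreal (fYs u) = c * tail_moment fY u"
    using zero_bias_density[OF assms(17,6) _ assms(18) _ assms(8,10)] assms(3,4,13,15)
    unfolding c_def by simp
  have "0 \<le> aY x"
    using assms(4,20,22) \<open>x0 \<le> x\<close> by (meson divide_nonneg_pos order.trans order.refl)
  have density_bound: "AE u in lborel. x \<le> u \<longrightarrow> c * tail_moment fX u \<le> ennreal (aY x * fX u)"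
    using fYs_eq
  proof eventually_elim
    case (elim u)
    then show ?case
      using assms(2,19,20,21,22) \<open>x0 \<le> x\<close>
      by (intro impI scaled_tail_moment_le_by_ratio[where fY = fY and fYs = fYs]) auto
  qed
  have "ennreal (prob {\<omega> \<in> space M. x \<le> Xs \<omega>}) = (\<integral>\<^sup>+ u \<in> {x..}. c * tail_moment fX u \<partial>lborel)"
    using zero_bias_tail_prob[OF assms(16,5) _ assms(7,9), of x] assms(2,13,14,19) \<open>x0 \<le> x\<close>
    unfolding c_def by (simp add: nn_integral_cmult mult.assoc)
  also have "\<dots> \<le> (\<integral>\<^sup>+ u \<in> {x..}. ennreal (aY x * fX u) \<partial>lborel)"
    using density_bound by (intro nn_integral_mono_AE) (auto simp: indicator_def)
  also have "\<dots> = ennreal (aY x) * emeasure M (X -` {x..} \<inter> space M)"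
    using \<open>0 \<le> aY x\<close> assms(2)
    by (simp add: ennreal_mult nn_integral_cmult mult.assoc distributed_emeasure[OF assms(5)])
  also have "\<dots> = ennreal (aY x * prob {\<omega> \<in> space M. x \<le> X \<omega>})"
    using \<open>0 \<le> aY x\<close> by (simp add: emeasure_eq_measure vimage_def Int_def conj_commute ennreal_mult)
  finally show "prob {\<omega> \<in> space M. x \<le> Xs \<omega>} \<le> aY x * prob {\<omega> \<in> space M. x \<le> X \<omega>}"
    using \<open>0 \<le> aY x\<close> by (simp add: ennreal_le_iff)
qed

end
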